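(* Let $C$ be a cycle graph. If $u$ and $v$ are non-adjacent vertices of $C$, then there exists a u-switch $\tau$ over $C$ such that $uv\in E(\tau(C))$.
   Context: Graphs are finite, simple, undirected, labeled. A unicyclic graph is a connected graph with exactly one cycle. For vertices $a,b,c,d$, $A=\binom{a\ b}{c\ d}$ is interchangeable in $G$ if $ab,cd\in E(G)$, $\{a,b\}\cap\{c,d\}=\varnothing$, $ac,bd\notin E(G)$; the 2-switch $\tau_A$ sends $G$ to $G-ab-cd+ac+bd$ if $A$ is interchangeable and to $G$ otherwise (trivial). A nontrivial 2-switch $\tau$ over a unicyclic $U$ is a u-switch if $\tau(U)$ is unicyclic. *)

theory Defs
  imports Main
begin

definition graph :: "'a set \<Rightarrow> 'a set set \<Rightarrow> bool" where
  "graph V E \<longleftrightarrow> finite V \<and> (\<forall>e\<in>E. \<exists>x y. x \<noteq> y \<and> e = {x, y} \<and> x \<in> V \<and> y \<in> V)"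

definition adj :: "'a set set \<Rightarrow> 'a \<Rightarrow> 'a \<Rightarrow> bool" where
  "adj E x y \<longleftrightarrow> {x, y} \<in> E"

definition connected :: "'a set \<Rightarrow> 'a set set \<Rightarrow> bool" where
  "connected V E \<longleftrightarrow> V \<noteq> {} \<and> (\<forall>x\<in>V. \<forall>y\<in>V. (adj E)\<^sup>*\<^sup>* x y)"

definition degree :: "'a set set \<Rightarrow> 'a \<Rightarrow> nat" where
  "degree E x = card {e \<in> E. x \<in> e}"

definition cycle_graph :: "'a set \<Rightarrow> 'a set set \<Rightarrow> bool" where
  "cycle_graph V E \<longleftrightarrow> graph V E \<and> connected V E \<and> (\<forall>x\<in>V. degree E x = 2)"

definition is_cycle :: "'a set \<Rightarrow> 'a set set \<Rightarrow> 'a set set \<Rightarrow> bool" where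
  "is_cycle V E C \<longleftrightarrow> C \<subseteq> E \<and> C \<noteq> {} \<and> cycle_graph (\<Union>C) C"

definition unicyclic :: "'a set \<Rightarrow> 'a set set \<Rightarrow> bool" where
  "unicyclic V E \<longleftrightarrow> graph V E \<and> connected V E \<and> (\<exists>!C. is_cycle V E C)"

definition interchangeable :: "'a set set \<Rightarrow> 'a \<Rightarrow> 'a \<Rightarrow> 'a \<Rightarrow> 'a \<Rightarrow> bool" where
  "interchangeable E a b c d \<longleftrightarrow>
     {a, b} \<in> E \<and> {c, d} \<in> E \<and> {a, b} \<inter> {c, d} = {} \<and> {a, c} \<notin> E \<and> {b, d} \<notin> E"

definition two_switch :: "'a set set \<Rightarrow> 'a \<Rightarrow> 'a \<Rightarrow> 'a \<Rightarrow> 'a \<Rightarrow> 'a set set" where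
  "two_switch E a b c d =
     (if interchangeable E a b c d
      then (E - {{a, b}, {c, d}}) \<union> {{a, c}, {b, d}}
      else E)"

definition u_switch :: "'a set \<Rightarrow> 'a set set \<Rightarrow> 'a \<Rightarrow> 'a \<Rightarrow> 'a \<Rightarrow> 'a \<Rightarrow> bool" where
  "u_switch V E a b c d \<longleftrightarrow>
     unicyclic V E \<and> two_switch E a b c d \<noteq> E \<and> unicyclic V (two_switch E a b c d)"

end

theory Submission
  imports Defs
begin

text \<open>Walking around the cycle graph from u gives an enumeration x 0 = u, x 1, ..., x (n - 1) of its
  vertices along the cycle, with v = x k for some 2 \<le> k \<le> n - 2. The 2-switch of
  (u, x 1) with (v, x (k + 1)) replaces these two edges by u v and x 1 x (k + 1); the result is
  again a single cycle, u v x (k - 1) ... x 1 x (k + 1) ... x (n - 1) u. A 2-switch preserves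
  all degrees, so the result is a cycle graph, and a cycle graph is unicyclic because its only
  cycle is the whole graph.\<close>

lemma symp_adj: "symp (adj E)"
  by (auto intro: sympI simp: adj_def insert_commute)

lemma adj_rtranclp_sym: "(adj E)\<^sup>*\<^sup>* x y \<Longrightarrow> (adj E)\<^sup>*\<^sup>* y x"
  by (metis symp_adj symp_rtranclp sympD)

lemma adj_rtranclp_mono: "E \<subseteq> E' \<Longrightarrow> (adj E)\<^sup>*\<^sup>* x y \<Longrightarrow> (adj E')\<^sup>*\<^sup>* x y"
  by (metis adj_def predicate2I rtranclp_mono subsetD predicate2D)

lemma graph_edge: "graph V E \<Longrightarrow> {x, y} \<in> E \<Longrightarrow> x \<noteq> y \<and> x \<in> V \<and> y \<in> V"
  unfolding graph_def by (metis doubleton_eq_iff)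

lemma graph_edgeE:
  assumes "graph V E" "e \<in> E"
  obtains x y where "x \<noteq> y" "e = {x, y}" "x \<in> V" "y \<in> V"
  using assms unfolding graph_def by blast

lemma graph_finite_edges:
  assumes "graph V E"
  shows "finite E"
proof -
  have "E \<subseteq> Pow V" by (auto elim!: graph_edgeE[OF assms])
  moreover have "finite V" using assms by (simp add: graph_def)
  ultimately show ?thesis by (simp add: finite_subset)
qed

lemma adj_rtranclp_closed:
  assumes "(adj E)\<^sup>*\<^sup>* x y" "x \<in> S" "\<And>w z. w \<in> S \<Longrightarrow> {w, z} \<in> E \<Longrightarrow> z \<in> S"
  shows "y \<in> S"
  using assms(1) by induction (use assms in \<open>auto simp: adj_def\<close>)

lemma adj_rtranclp_path:
  assumes "m \<le> k" "\<And>i. m \<le> i \<Longrightarrow> i < k \<Longrightarrow> {x i, x (Suc i)} \<in> E"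
  shows "(adj E)\<^sup>*\<^sup>* (x m) (x k)"
  using assms by (induction rule: dec_induct) (auto simp: adj_def intro: rtranclp.rtrancl_into_rtrancl)

lemma adj_rtranclp_Diff:
  assumes "(adj E)\<^sup>*\<^sup>* x y"
  shows "(adj (E - F))\<^sup>*\<^sup>* x y \<or> (\<exists>e\<in>F. \<exists>z\<in>e. (adj (E - F))\<^sup>*\<^sup>* z y)"
  using assms
proof induction
  case (step y z)
  show ?case
  proof (cases "{y, z} \<in> F")
    case True
    then show ?thesis by blast
  next
    case False
    then have "adj (E - F) y z" using step.hyps(2) by (simp add: adj_def)
    then show ?thesis using step.IH by (meson rtranclp.rtrancl_into_rtrancl)
  qed
qed simp

lemma connected_edge_replacement:
  assumes "connected V E" "E - F \<subseteq> E'" "w \<in> V"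
    and "\<And>e z. e \<in> F \<Longrightarrow> z \<in> e \<Longrightarrow> (adj E')\<^sup>*\<^sup>* w z"
  shows "connected V E'"
proof -
  have from_w: "(adj E')\<^sup>*\<^sup>* w y" if "y \<in> V" for y
  proof -
    have "(adj E)\<^sup>*\<^sup>* w y" using assms(1,3) that by (simp add: connected_def)
    then have "(adj (E - F))\<^sup>*\<^sup>* w y \<or> (\<exists>e\<in>F. \<exists>z\<in>e. (adj (E - F))\<^sup>*\<^sup>* z y)"
      by (rule adj_rtranclp_Diff)
    then show ?thesis
    proof (elim disjE bexE)
      assume "(adj (E - F))\<^sup>*\<^sup>* w y"
      then show ?thesis by (rule adj_rtranclp_mono[OF assms(2)])
    next
      fix e z assume "e \<in> F" "z \<in> e" and path: "(adj (E - F))\<^sup>*\<^sup>* z y"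
      from path have "(adj E')\<^sup>*\<^sup>* z y" by (rule adj_rtranclp_mono[OF assms(2)])
      with assms(4)[OF \<open>e \<in> F\<close> \<open>z \<in> e\<close>] show ?thesis by (rule rtranclp_trans)
    qed
  qed
  have "(adj E')\<^sup>*\<^sup>* y z" if "y \<in> V" "z \<in> V" for y z
    using adj_rtranclp_sym[OF from_w[OF that(1)]] from_w[OF that(2)] by (rule rtranclp_trans)
  then show ?thesis using assms(3) unfolding connected_def by blast
qed

definition neighbors :: "'a set set \<Rightarrow> 'a \<Rightarrow> 'a set" where
  "neighbors E x = {y. {x, y} \<in> E}"

lemma card_neighbors:
  assumes "graph V E"
  shows "card (neighbors E x) = degree E x"
proof -
  have "e \<in> (\<lambda>y. {x, y}) ` neighbors E x" if e: "e \<in> E" "x \<in> e" for e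
  proof -
    obtain p q where "e = {p, q}" using graph_edgeE[OF assms e(1)] by blast
    then have "e = {x, if x = p then q else p}" using e(2) by auto
    then show ?thesis using e(1) by (auto simp: neighbors_def)
  qed
  then have "(\<lambda>y. {x, y}) ` neighbors E x = {e \<in> E. x \<in> e}"
    by (auto simp: neighbors_def)
  moreover have "inj_on (\<lambda>y. {x, y}) (neighbors E x)"
    by (auto intro: inj_onI simp: doubleton_eq_iff)
  ultimately show ?thesis unfolding degree_def by (metis card_image)
qed

lemma other_neighbor:
  assumes "graph V E" "2 \<le> degree E c"
  obtains q where "{c, q} \<in> E" "q \<noteq> p"
proof -
  have "2 \<le> card (neighbors E c)" using assms card_neighbors by metis
  then have "\<not> neighbors E c \<subseteq> {p}" using card_mono[of "{p}" "neighbors E c"] by auto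
  then show ?thesis using that by (auto simp: neighbors_def)
qed

lemma degree_2_neighbor_cases:
  assumes "graph V E" "degree E c = 2" "{c, p} \<in> E" "{c, q} \<in> E" "p \<noteq> q" "{c, r} \<in> E"
  shows "r = p \<or> r = q"
proof (rule ccontr)
  assume "\<not> (r = p \<or> r = q)"
  then have "card {p, q, r} = 3" using assms(5) by (auto simp: card_insert_if)
  moreover have "{p, q, r} \<subseteq> neighbors E c" using assms(3,4,6) by (simp add: neighbors_def)
  moreover have "card (neighbors E c) = 2" using assms(1,2) card_neighbors by metis
  ultimately show False using card_mono[of "neighbors E c" "{p, q, r}"] card.infinite by fastforce
qed

lemma card_incident_pair:
  assumes "X \<noteq> Y"
  shows "card {e \<in> {X, Y}. z \<in> e} = of_bool (z \<in> X) + of_bool (z \<in> Y)"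
proof -
  have "{e \<in> {X, Y}. z \<in> e} = (if z \<in> X then {X} else {}) \<union> (if z \<in> Y then {Y} else {})"
    by auto
  then show ?thesis using assms by (simp add: card_insert_if)
qed

lemma degree_two_switch:
  assumes "graph V E"
  shows "degree (two_switch E a b c d) z = degree E z"
proof (cases "interchangeable E a b c d")
  case True
  let ?S = "{e \<in> E. z \<in> e}"
  let ?A = "{e \<in> {{a, b}, {c, d}}. z \<in> e}"
  let ?B = "{e \<in> {{a, c}, {b, d}}. z \<in> e}"
  have ab: "{a, b} \<in> E" "{c, d} \<in> E" "{a, c} \<notin> E" "{b, d} \<notin> E" "{a, b} \<inter> {c, d} = {}"
    using True unfolding interchangeable_def by auto
  then have "a \<noteq> b" "c \<noteq> d" using graph_edge[OF assms] by blast+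
  moreover have "{a, b} \<noteq> {c, d}" "{a, c} \<noteq> {b, d}"
    using ab(5) \<open>a \<noteq> b\<close> by (auto simp: doubleton_eq_iff)
  ultimately have "card ?A = card ?B" using ab(5)
    unfolding card_incident_pair[OF \<open>{a, b} \<noteq> {c, d}\<close>] card_incident_pair[OF \<open>{a, c} \<noteq> {b, d}\<close>]
    by auto
  have "?A \<subseteq> ?S" "finite ?S" using ab graph_finite_edges[OF assms] by auto
  have "{e \<in> two_switch E a b c d. z \<in> e} = (?S - ?A) \<union> ?B"
    using True unfolding two_switch_def by auto
  then have "degree (two_switch E a b c d) z = card ((?S - ?A) \<union> ?B)"
    unfolding degree_def by simp
  also have "\<dots> = card (?S - ?A) + card ?B"
    using \<open>finite ?S\<close> ab(3,4) by (intro card_Un_disjoint) auto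
  also have "\<dots> = card ?S"
    using \<open>card ?A = card ?B\<close> card_mono[OF \<open>finite ?S\<close> \<open>?A \<subseteq> ?S\<close>]
      card_Diff_subset[OF finite_subset[OF \<open>?A \<subseteq> ?S\<close> \<open>finite ?S\<close>] \<open>?A \<subseteq> ?S\<close>]
    by linarith
  finally show ?thesis unfolding degree_def .
qed (simp add: two_switch_def)

lemma cycle_graph_Union_edges:
  assumes "cycle_graph V E"
  shows "\<Union>E = V"
proof
  show "\<Union>E \<subseteq> V"
  proof
    fix x assume "x \<in> \<Union>E"
    then obtain e where "e \<in> E" "x \<in> e" by blast
    then show "x \<in> V"
      using assms unfolding cycle_graph_def by (auto elim: graph_edgeE)
  qed
  show "V \<subseteq> \<Union>E"
  proof
    fix x assume "x \<in> V"
    then have "{e \<in> E. x \<in> e} \<noteq> {}"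
      using assms unfolding cycle_graph_def degree_def by (metis card.empty zero_neq_numeral)
    then show "x \<in> \<Union>E" by blast
  qed
qed

text \<open>A cycle C of a cycle graph uses both edges at each of its vertices, so the vertices of C
  are closed under adjacency and, by connectivity, C is the whole graph.\<close>
lemma cycle_of_cycle_graph:
  assumes cg: "cycle_graph V E" and C: "is_cycle V E C"
  shows "C = E"
proof -
  have g: "graph V E" and con: "connected V E" and deg: "\<forall>x\<in>V. degree E x = 2"
    using cg by (auto simp: cycle_graph_def)
  have CE: "C \<subseteq> E" and "C \<noteq> {}" and degC: "\<forall>x\<in>\<Union>C. degree C x = 2"
    using C by (auto simp: is_cycle_def cycle_graph_def)
  have CV: "\<Union>C \<subseteq> V" using CE cycle_graph_Union_edges[OF cg] by blast
  have incident: "{e \<in> E. x \<in> e} = {e \<in> C. x \<in> e}" if "x \<in> \<Union>C" for x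
  proof (rule sym, rule card_subset_eq)
    show "finite {e \<in> E. x \<in> e}" using graph_finite_edges[OF g] by simp
    show "{e \<in> C. x \<in> e} \<subseteq> {e \<in> E. x \<in> e}" using CE by blast
    show "card {e \<in> C. x \<in> e} = card {e \<in> E. x \<in> e}"
      using degC deg CV that unfolding degree_def by auto
  qed
  obtain e0 where "e0 \<in> C" using \<open>C \<noteq> {}\<close> by blast
  then obtain w q where "e0 = {w, q}" using graph_edgeE[OF g] CE by blast
  then have "w \<in> \<Union>C" using \<open>e0 \<in> C\<close> by blast
  have cover: "y \<in> \<Union>C" if "y \<in> V" for y
  proof (rule adj_rtranclp_closed)
    show "(adj E)\<^sup>*\<^sup>* w y" using con \<open>w \<in> \<Union>C\<close> CV that by (auto simp: connected_def)
    show "w \<in> \<Union>C" by fact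
    show "z \<in> \<Union>C" if "p \<in> \<Union>C" "{p, z} \<in> E" for p z
      using incident[OF that(1)] that(2) by blast
  qed
  have "e \<in> C" if "e \<in> E" for e
  proof -
    obtain p q where "e = {p, q}" "p \<in> V" using graph_edgeE[OF g \<open>e \<in> E\<close>] by blast
    then show ?thesis using incident cover \<open>e \<in> E\<close> by blast
  qed
  then show ?thesis using CE by blast
qed

lemma cycle_graph_unicyclic:
  assumes "cycle_graph V E"
  shows "unicyclic V E"
proof -
  have "E \<noteq> {}"
    using assms cycle_graph_Union_edges[OF assms] by (auto simp: cycle_graph_def connected_def)
  then have "is_cycle V E E"
    using assms cycle_graph_Union_edges[OF assms] by (simp add: is_cycle_def)
  then have "\<exists>!C. is_cycle V E C" using cycle_of_cycle_graph[OF assms] by blast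
  then show ?thesis using assms by (simp add: unicyclic_def cycle_graph_def)
qed

lemma cycle_graph_two_switch:
  assumes "cycle_graph V E" "interchangeable E a b c d" "connected V (two_switch E a b c d)"
  shows "cycle_graph V (two_switch E a b c d)"
proof -
  have g: "graph V E" using assms(1) by (simp add: cycle_graph_def)
  have "graph V (two_switch E a b c d)"
    using g assms(2) graph_edge[OF g] unfolding graph_def two_switch_def interchangeable_def
    by auto
  then show ?thesis
    using assms degree_two_switch[OF g] by (simp add: cycle_graph_def)
qed

definition nonbacktracking_walk :: "'a set set \<Rightarrow> (nat \<Rightarrow> 'a) \<Rightarrow> bool" where
  "nonbacktracking_walk E x \<longleftrightarrow> (\<forall>i. {x i, x (Suc i)} \<in> E \<and> x (Suc (Suc i)) \<noteq> x i)"

lemma nonbacktracking_walk_exists: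
  assumes g: "graph V E" and deg: "\<forall>v\<in>V. 2 \<le> degree E v" and "{p, c} \<in> E"
  obtains x where "nonbacktracking_walk E x" "x 0 = p" "x (Suc 0) = c"
proof -
  let ?P = "\<lambda>(n :: nat) (s :: 'a \<times> 'a). {fst s, snd s} \<in> E \<and> (n = 0 \<longrightarrow> s = (p, c))"
  let ?Q = "\<lambda>(n :: nat) (s :: 'a \<times> 'a) s'. fst s' = snd s \<and> snd s' \<noteq> fst s"
  have "\<exists>f. \<forall>n. ?P n (f n) \<and> ?Q n (f n) (f (Suc n))"
  proof (rule dependent_nat_choice)
    show "\<exists>s. ?P 0 s" using \<open>{p, c} \<in> E\<close> by auto
    fix s n assume "?P n s"
    then have "2 \<le> degree E (snd s)" using deg graph_edge[OF g] by blast
    then obtain q where "{snd s, q} \<in> E" "q \<noteq> fst s" using other_neighbor[OF g] by metis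
    then show "\<exists>s'. ?P (Suc n) s' \<and> ?Q n s s'" by (intro exI[of _ "(snd s, q)"]) auto
  qed
  then obtain f where f: "\<And>n. ?P n (f n) \<and> ?Q n (f n) (f (Suc n))" by blast
  have "nonbacktracking_walk E (\<lambda>i. fst (f i))"
    unfolding nonbacktracking_walk_def using f by simp
  moreover have "fst (f 0) = p" "fst (f (Suc 0)) = c" using f[of 0] by auto
  ultimately show ?thesis using that by blast
qed

lemma walk_edge: "nonbacktracking_walk E x \<Longrightarrow> {x i, x (Suc i)} \<in> E"
  by (simp add: nonbacktracking_walk_def)

definition first_repetition :: "(nat \<Rightarrow> 'a) \<Rightarrow> nat" where
  "first_repetition x = (LEAST j. \<exists>i<j. x i = x j)"

context
  fixes V :: "'a set" and E :: "'a set set" and x :: "nat \<Rightarrow> 'a"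
  assumes cycle: "cycle_graph V E" and walk: "nonbacktracking_walk E x"
begin

lemma walk_in_vertices: "x i \<in> V"
  using graph_edge[OF _ walk_edge[OF walk]] cycle unfolding cycle_graph_def by blast

lemma walk_not_loop: "x (Suc i) \<noteq> x i"
  using graph_edge[OF _ walk_edge[OF walk, of i]] cycle unfolding cycle_graph_def by metis

lemma walk_neighbor_cases:
  assumes "{x (Suc i), r} \<in> E"
  shows "r = x i \<or> r = x (Suc (Suc i))"
proof (rule degree_2_neighbor_cases)
  show "graph V E" "degree E (x (Suc i)) = 2"
    using cycle walk_in_vertices by (auto simp: cycle_graph_def)
  show "{x (Suc i), x i} \<in> E" using walk_edge[OF walk] by (simp add: insert_commute)
  show "{x (Suc i), x (Suc (Suc i))} \<in> E" by (rule walk_edge[OF walk])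
  show "x i \<noteq> x (Suc (Suc i))" using walk unfolding nonbacktracking_walk_def by metis
qed (fact assms)

lemma walk_repeats: "\<exists>j. \<exists>i<j. x i = x j"
proof -
  have "finite V" using cycle by (simp add: cycle_graph_def graph_def)
  then have "finite (range x)" by (rule finite_subset[rotated]) (auto intro: walk_in_vertices)
  then have "\<not> inj x" using finite_imageD infinite_UNIV_nat by auto
  then obtain i j where "i \<noteq> j" "x i = x j" unfolding inj_def by blast
  then show ?thesis by (metis nat_neq_iff)
qed

lemma first_repetition_inj: "inj_on x {..<first_repetition x}"
proof (rule inj_onI, rule ccontr)
  fix i j assume "i \<in> {..<first_repetition x}" "j \<in> {..<first_repetition x}" "x i = x j" "i \<noteq> j"
  then have "\<exists>i'<max i j. x i' = x (max i j)"
    by (cases "i < j") (auto simp: max_def intro: exI[of _ j])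
  then have "first_repetition x \<le> max i j" unfolding first_repetition_def by (rule Least_le)
  then show False using \<open>i \<in> _\<close> \<open>j \<in> _\<close> by auto
qed

text \<open>If the first repetition x n = x i had 0 < i, then x (n - 1), a neighbor of x i, would
  repeat x (i - 1) or x (i + 1) before time n.\<close>
lemma first_repetition_returns: "x (first_repetition x) = x 0"
proof -
  let ?n = "first_repetition x"
  obtain i where "i < ?n" "x i = x ?n"
    using LeastI_ex[OF walk_repeats] unfolding first_repetition_def by blast
  show ?thesis
  proof (cases i)
    case 0
    then show ?thesis using \<open>x i = x ?n\<close> by simp
  next
    case (Suc i')
    obtain n' where n': "?n = Suc n'" using \<open>i < ?n\<close> not0_implies_Suc by fastforce
    have "{x (Suc i'), x n'} \<in> E"
      using walk_edge[OF walk, of n'] n' \<open>x i = x ?n\<close> Suc by (simp add: insert_commute)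
    then consider "x n' = x i'" | "x n' = x (Suc i)"
      using walk_neighbor_cases Suc by blast
    then show ?thesis
    proof cases
      case 1
      then show ?thesis
        using first_repetition_inj \<open>i < ?n\<close> n' Suc by (auto dest: inj_onD)
    next
      case 2
      show ?thesis
      proof (cases "Suc i = ?n")
        case True
        then have "x (Suc n') = x n'" using 2 n' by simp
        then show ?thesis using walk_not_loop by blast
      next
        case False
        then have "n' = Suc i"
          using 2 first_repetition_inj \<open>i < ?n\<close> n' by (auto dest: inj_onD)
        then have "x (Suc (Suc i)) = x i" using \<open>x i = x ?n\<close> n' by simp
        then show ?thesis using walk by (simp add: nonbacktracking_walk_def)
      qed
    qed
  qed
qed

lemma first_repetition_ge_3: "3 \<le> first_repetition x"
proof -
  have "first_repetition x \<noteq> 0"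
    using LeastI_ex[OF walk_repeats] unfolding first_repetition_def by auto
  moreover have "first_repetition x \<noteq> 1"
    using first_repetition_returns walk_not_loop[of 0] by auto
  moreover have "first_repetition x \<noteq> 2"
    using first_repetition_returns walk by (auto simp: nonbacktracking_walk_def numeral_2_eq_2)
  ultimately show ?thesis by linarith
qed

lemma first_repetition_covers: "x ` {..<first_repetition x} = V"
proof
  let ?n = "first_repetition x"
  let ?S = "x ` {..<?n}"
  show "?S \<subseteq> V" using walk_in_vertices by blast
  obtain n' where n': "?n = Suc n'" using first_repetition_ge_3 by (cases ?n) auto
  have closed: "z \<in> ?S" if w: "w \<in> ?S" "{w, z} \<in> E" for w z
  proof -
    obtain i where "i < ?n" "w = x i" using w(1) by blast
    show ?thesis
    proof (cases i)
      case 0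
      have "z = x (Suc 0) \<or> z = x n'"
      proof (rule degree_2_neighbor_cases)
        show "graph V E" "degree E (x 0) = 2"
          using cycle walk_in_vertices by (auto simp: cycle_graph_def)
        show "{x 0, x (Suc 0)} \<in> E" by (rule walk_edge[OF walk])
        show "{x 0, x n'} \<in> E"
          using walk_edge[OF walk, of n'] first_repetition_returns n' by (simp add: insert_commute)
        show "x (Suc 0) \<noteq> x n'"
          using first_repetition_inj first_repetition_ge_3 n' by (auto dest: inj_onD)
        show "{x 0, z} \<in> E" using w(2) \<open>w = x i\<close> 0 by simp
      qed
      then show ?thesis using first_repetition_ge_3 n' by auto
    next
      case (Suc i')
      then have "z = x i' \<or> z = x (Suc i)"
        using walk_neighbor_cases w(2) \<open>w = x i\<close> by blast
      moreover have "x (Suc i) \<in> ?S"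
        using \<open>i < ?n\<close> first_repetition_returns first_repetition_ge_3
        by (cases "Suc i = ?n") auto
      ultimately show ?thesis using \<open>i < ?n\<close> Suc by auto
    qed
  qed
  show "V \<subseteq> ?S"
  proof
    fix y assume "y \<in> V"
    then have "(adj E)\<^sup>*\<^sup>* (x 0) y"
      using cycle walk_in_vertices by (simp add: cycle_graph_def connected_def)
    then show "y \<in> ?S"
      by (rule adj_rtranclp_closed) (use first_repetition_ge_3 closed in auto)
  qed
qed

end

definition hamiltonian_cycle :: "'a set \<Rightarrow> 'a set set \<Rightarrow> (nat \<Rightarrow> 'a) \<Rightarrow> nat \<Rightarrow> bool" where
  "hamiltonian_cycle V E x n \<longleftrightarrow>
     x n = x 0 \<and> inj_on x {..<n} \<and> x ` {..<n} = V \<and> (\<forall>i<n. {x i, x (Suc i)} \<in> E)"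

lemma hamiltonian_cycle_edge: "hamiltonian_cycle V E x n \<Longrightarrow> i < n \<Longrightarrow> {x i, x (Suc i)} \<in> E"
  by (simp add: hamiltonian_cycle_def)

lemma hamiltonian_cycle_inj_iff:
  "hamiltonian_cycle V E x n \<Longrightarrow> i < n \<Longrightarrow> j < n \<Longrightarrow> x i = x j \<longleftrightarrow> i = j"
  by (auto simp: hamiltonian_cycle_def dest: inj_onD)

lemma cycle_graph_hamiltonian_cycle:
  assumes "cycle_graph V E" "u \<in> V"
  obtains x n where "hamiltonian_cycle V E x n" "x 0 = u"
proof -
  have g: "graph V E" and deg: "\<forall>v\<in>V. 2 \<le> degree E v"
    using assms(1) by (auto simp: cycle_graph_def)
  obtain a where "{u, a} \<in> E" using other_neighbor[OF g] deg assms(2) by metis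
  then obtain x where "nonbacktracking_walk E x" "x 0 = u"
    using nonbacktracking_walk_exists[OF g deg] by metis
  then have "hamiltonian_cycle V E x (first_repetition x)"
    unfolding hamiltonian_cycle_def
    using first_repetition_returns first_repetition_inj first_repetition_covers walk_edge assms(1)
    by blast
  then show ?thesis using that \<open>x 0 = u\<close> by blast
qed

context
  fixes V :: "'a set" and E :: "'a set set" and x :: "nat \<Rightarrow> 'a" and n k :: nat
  assumes cycle: "cycle_graph V E" and ham: "hamiltonian_cycle V E x n"
    and chord: "0 < k" "k < n" "{x 0, x k} \<notin> E"
begin

lemma chord_bounds: "2 \<le> k" "Suc k < n"
proof -
  note edge = hamiltonian_cycle_edge[OF ham]
  show "2 \<le> k" using chord edge[of 0] by (cases "k = 1") auto
  have "{x 0, x (n - 1)} \<in> E"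
    using edge[of "n - 1"] chord(2) ham by (simp add: hamiltonian_cycle_def insert_commute)
  then show "Suc k < n" using chord by (cases "Suc k = n") auto
qed

lemma interchangeable_chord: "interchangeable E (x 0) (x 1) (x k) (x (Suc k))"
proof -
  note edge = hamiltonian_cycle_edge[OF ham] and inj = hamiltonian_cycle_inj_iff[OF ham]
  have "x (Suc k) \<notin> {x 0, x 2}" using inj chord_bounds by auto
  moreover have "r = x 0 \<or> r = x 2" if "{x 1, r} \<in> E" for r
  proof (rule degree_2_neighbor_cases[OF _ _ _ _ _ that])
    show "graph V E" "degree E (x 1) = 2"
      using cycle ham chord_bounds by (auto simp: cycle_graph_def hamiltonian_cycle_def)
    show "{x 1, x 0} \<in> E" "{x 1, x 2} \<in> E"
      using edge[of 0] edge[of 1] chord_bounds by (auto simp: insert_commute numeral_2_eq_2)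
    show "x 0 \<noteq> x 2" using inj chord_bounds by auto
  qed
  ultimately have "{x 1, x (Suc k)} \<notin> E" by blast
  moreover have "{x 0, x 1} \<inter> {x k, x (Suc k)} = {}" using inj chord_bounds by auto
  ultimately show ?thesis
    unfolding interchangeable_def using edge[of 0] edge[of k] chord by auto
qed

lemma connected_two_switch_chord: "connected V (two_switch E (x 0) (x 1) (x k) (x (Suc k)))"
  (is "connected V ?E'")
proof -
  note edge = hamiltonian_cycle_edge[OF ham] and inj = hamiltonian_cycle_inj_iff[OF ham]
  let ?F = "{{x 0, x 1}, {x k, x (Suc k)}}"
  have E': "?E' = (E - ?F) \<union> {{x 0, x k}, {x 1, x (Suc k)}}"
    using interchangeable_chord by (simp add: two_switch_def)
  have "(adj ?E')\<^sup>*\<^sup>* (x 1) (x k)" \<comment> \<open>the path x 1 ... x k avoids both removed edges\<close>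
  proof (rule adj_rtranclp_path)
    show "1 \<le> k" using chord by simp
    show "{x i, x (Suc i)} \<in> ?E'" if "1 \<le> i" "i < k" for i
      using that edge[of i] inj[of i] inj[of "Suc i"] chord_bounds unfolding E'
      by (auto simp: doubleton_eq_iff)
  qed
  then have "(adj ?E')\<^sup>*\<^sup>* (x 0) (x 1)"
    using E' by (auto simp: adj_def intro: converse_rtranclp_into_rtranclp adj_rtranclp_sym)
  moreover have "adj ?E' (x 0) (x k)" "adj ?E' (x 1) (x (Suc k))"
    using E' by (auto simp: adj_def)
  ultimately have reach: "(adj ?E')\<^sup>*\<^sup>* (x 0) z" if "z \<in> {x 0, x 1, x k, x (Suc k)}" for z
    using that by (auto intro: rtranclp.rtrancl_into_rtrancl)
  show ?thesis
  proof (rule connected_edge_replacement)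
    show "connected V E" using cycle by (simp add: cycle_graph_def)
    show "E - ?F \<subseteq> ?E'" using E' by blast
    show "x 0 \<in> V" using ham chord(2) by (auto simp: hamiltonian_cycle_def)
    show "(adj ?E')\<^sup>*\<^sup>* (x 0) z" if "e \<in> ?F" "z \<in> e" for e z
      using reach that by blast
  qed
qed

end

theorem lemma3p7:
  fixes V :: "'a set" and E :: "'a set set" and u v :: 'a
  assumes "cycle_graph V E"
    and "u \<in> V" and "v \<in> V" and "u \<noteq> v" and "{u, v} \<notin> E"
  shows "\<exists>a b c d. u_switch V E a b c d \<and> {u, v} \<in> two_switch E a b c d"
proof -
  obtain x n where ham: "hamiltonian_cycle V E x n" and "x 0 = u"
    using cycle_graph_hamiltonian_cycle assms(1,2) by metis
  then obtain k where "k < n" "v = x k" "0 < k"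
    using assms(3,4) by (auto simp: hamiltonian_cycle_def gr0I)
  have "{x 0, x k} \<notin> E" using assms(5) \<open>x 0 = u\<close> \<open>v = x k\<close> by simp
  note chord = assms(1) ham \<open>0 < k\<close> \<open>k < n\<close> this
  let ?E' = "two_switch E u (x 1) v (x (Suc k))"
  have switch: "interchangeable E u (x 1) v (x (Suc k))"
    using interchangeable_chord[OF chord] \<open>x 0 = u\<close> \<open>v = x k\<close> by simp
  moreover have "connected V ?E'"
    using connected_two_switch_chord[OF chord] \<open>x 0 = u\<close> \<open>v = x k\<close> by simp
  ultimately have "cycle_graph V ?E'" by (rule cycle_graph_two_switch[OF assms(1)])
  moreover have "{u, v} \<in> ?E'" using switch by (simp add: two_switch_def)
  ultimately have "u_switch V E u (x 1) v (x (Suc k))"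
    using cycle_graph_unicyclic assms(1,5) unfolding u_switch_def by auto
  then show ?thesis using \<open>{u, v} \<in> ?E'\<close> by blast
qed

end
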